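(* Identify $\mathbf r=(x,y)\in\mathbb R^2$ with $z=x+iy\in\mathbb C$, and let $$K(w,z)=\frac{1}{\pi}\,e^{-(|w|^2+|z|^2)/2}\,e^{w\bar z},\qquad w,z\in\mathbb C .$$ For $m\ge 1$ define $\rho_{(m)}(\mathbf r_1,\dots,\mathbf r_m)=\det\big[K(z_j,z_l)\big]_{j,l=1}^m$ (the $m$-point correlation functions of the bulk scaled complex Ginibre ensemble). Then for every integer $k\ge 1$, every $\mathbf r_1,\dots,\mathbf r_k\in\mathbb R^2$ (with $\mathbf r_j=(x_j,y_j)$) and every integer $p\ge 0$, $$\int_{\mathbb R^2}(x-iy)^p\Big(\rho_{(k+1)}(\mathbf r_1,\dots,\mathbf r_k,\mathbf r)-\frac1\pi\,\rho_{(k)}(\mathbf r_1,\dots,\mathbf r_k)\Big)\,dx\,dy\;+\;\Big(\sum_{j=1}^k (x_j-iy_j)^p\Big)\rho_{(k)}(\mathbf r_1,\dots,\mathbf r_k)=0,$$ where $\mathbf r=(x,y)$ is the integration variable.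
   Context: This is the statement that $\int_{\mathbb R^2}(x-iy)^p\,q(\mathbf r_1,\dots,\mathbf r_k,\mathbf r)\,d\mathbf r=0$ for $q(\mathbf r_1,\dots,\mathbf r_k,\mathbf r)=\rho_{(k+1)}(\mathbf r_1,\dots,\mathbf r_k,\mathbf r)-\frac1\pi\rho_{(k)}(\mathbf r_1,\dots,\mathbf r_k)+\sum_{j=1}^k\delta(\mathbf r-\mathbf r_j)\rho_{(k)}(\mathbf r_1,\dots,\mathbf r_k)$, with the delta-function terms integrated out explicitly. *)

theory Defs
  imports "HOL-Analysis.Analysis" "Jordan_Normal_Form.Determinant"
begin

definition ginibre_K :: "complex \<Rightarrow> complex \<Rightarrow> complex" where
  "ginibre_K w z =
     complex_of_real (1 / pi) * exp (- complex_of_real ((cmod w ^ 2 + cmod z ^ 2) / 2)) * exp (w * cnj z)"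

text \<open>m-point correlation function: rho_m(z_0,...,z_{m-1}) = det [K(z_j,z_l)]_{j,l<m}.
  Points are given as a sequence indexed from 0; only indices below m matter.\<close>
definition ginibre_rho :: "nat \<Rightarrow> (nat \<Rightarrow> complex) \<Rightarrow> complex" where
  "ginibre_rho m z = det (mat m m (\<lambda>(j, l). ginibre_K (z j) (z l)))"

end

theory Submission
  imports Defs "HOL-Probability.Probability" "HOL-Real_Asymp.Real_Asymp"
begin

(* Expanding rho_(k+1)(z_1,...,z_k,w) along its last row and column gives
   K(w,w) rho_k - sum_(j,l) K(w,z_l) K(z_j,w) C_jl with the cofactors C_jl of [K(z_j,z_l)],
   and K(w,w) = 1/pi cancels the subtracted term. Each remaining term is governed by the
   reproducing property  int conj(w)^p K(w,a) K(b,w) dw = conj(a)^p K(b,a),  which reduces to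
   the Gaussian moments  int conj(w)^p exp(w conj a + b conj w - |w|^2) dw = pi conj(a)^p exp(b conj a).
   For p = 0 this is a product of two one-dimensional Gaussian integrals; the step p -> p+1 is
   integration by parts for the Wirtinger derivative d/dw, which multiplies the integrand by
   conj a - conj w. Finally, Laplace expansion along column l collapses sum_j K(z_j,z_l) C_jl
   to rho_k. *)

section \<open>Bordered determinants\<close>

lemma mat_delete_mat_delete_last:
  assumes "M \<in> carrier_mat (Suc k) (Suc k)" and "l < k" and "j < k"
  shows "mat_delete (mat_delete M k l) j (k - 1) = mat_delete (mat_delete M k k) j l"
  using assms by (intro eq_matI) (auto simp: mat_delete_def)

lemma cofactor_last_row:
  fixes M :: "'a :: comm_ring_1 mat"
  assumes M: "M \<in> carrier_mat (Suc k) (Suc k)" and l: "l < k"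
  shows "cofactor M k l = - (\<Sum>j<k. M $$ (j, k) * cofactor (mat_delete M k k) j l)"
proof -
  define D where "D = mat_delete M k l"
  have D: "D \<in> carrier_mat k k"
    using mat_delete_carrier[OF M] by (simp add: D_def)
  have sign: "(-1) ^ (k + l) * (-1) ^ (j + (k - 1)) = - ((-1) ^ (j + l) :: 'a)" for j
    using l by (cases k) (simp_all add: power_add mult_ac flip: power_mult_distrib)
  have "det D = (\<Sum>j<k. D $$ (j, k - 1) * cofactor D j (k - 1))"
    using l by (intro laplace_expansion_column[OF D]) simp
  also have "\<dots> = (\<Sum>j<k. M $$ (j, k) * ((-1) ^ (j + (k - 1)) * det (mat_delete (mat_delete M k k) j l)))"
  proof (rule sum.cong[OF refl])
    fix j assume "j \<in> {..<k}"
    then have j: "j < k" by simp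
    have "D $$ (j, k - 1) = M $$ (j, k)"
      using j l M by (auto simp: D_def mat_delete_def)
    moreover have "cofactor D j (k - 1) = (-1) ^ (j + (k - 1)) * det (mat_delete (mat_delete M k k) j l)"
      using mat_delete_mat_delete_last[OF M l j] by (simp add: cofactor_def D_def)
    ultimately show "D $$ (j, k - 1) * cofactor D j (k - 1)
        = M $$ (j, k) * ((-1) ^ (j + (k - 1)) * det (mat_delete (mat_delete M k k) j l))"
      by simp
  qed
  finally have "cofactor M k l = (\<Sum>j<k. M $$ (j, k)
      * (((-1) ^ (k + l) * (-1) ^ (j + (k - 1))) * det (mat_delete (mat_delete M k k) j l)))"
    by (simp add: cofactor_def D_def sum_distrib_left mult_ac)
  then show ?thesis
    unfolding sign by (simp add: cofactor_def sum_negf)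
qed

lemma det_bordered:
  fixes M :: "'a :: comm_ring_1 mat"
  assumes M: "M \<in> carrier_mat (Suc k) (Suc k)"
  shows "det M = M $$ (k, k) * det (mat_delete M k k)
     - (\<Sum>l<k. \<Sum>j<k. M $$ (k, l) * M $$ (j, k) * cofactor (mat_delete M k k) j l)"
proof -
  have "det M = (\<Sum>l<Suc k. M $$ (k, l) * cofactor M k l)"
    by (rule laplace_expansion_row[OF M]) simp
  also have "\<dots> = M $$ (k, k) * det (mat_delete M k k) + (\<Sum>l<k. M $$ (k, l) * cofactor M k l)"
    by (simp add: cofactor_def)
  finally show ?thesis
    by (simp add: cofactor_last_row[OF M] sum_distrib_left sum_negf mult_ac)
qed

section \<open>Lebesgue measure on the complex plane\<close>

lemma measurable_Complex_pair [measurable]: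
  "(\<lambda>(x, y). Complex x y) \<in> measurable (lborel \<Otimes>\<^sub>M lborel) (borel :: complex measure)"
  unfolding Complex_eq by measurable

lemma lborel_complex:
  "(lborel :: complex measure) = distr (lborel \<Otimes>\<^sub>M lborel) borel (\<lambda>(x, y). Complex x y)"
proof (rule lborel_eqI)
  fix l u :: complex
  assume le: "\<And>b. b \<in> Basis \<Longrightarrow> l \<bullet> b \<le> u \<bullet> b"
  have "Re l \<le> Re u" and "Im l \<le> Im u"
    using le[of 1] le[of \<i>] by (auto simp: Basis_complex_def)
  moreover have "(\<lambda>(x, y). Complex x y) -` box l u \<inter> space (lborel \<Otimes>\<^sub>M lborel)
      = box (Re l) (Re u) \<times> box (Im l) (Im u)"
    by (auto simp: box_def Basis_complex_def space_pair_measure)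
  ultimately show "emeasure (distr (lborel \<Otimes>\<^sub>M lborel) borel (\<lambda>(x, y). Complex x y)) (box l u)
      = (\<Prod>b\<in>Basis. (u - l) \<bullet> b)"
    by (simp add: emeasure_distr lborel.emeasure_pair_measure_Times Basis_complex_def ennreal_mult)
qed simp

lemma integrable_lborel_complex_iff:
  fixes f :: "complex \<Rightarrow> 'b::{banach, second_countable_topology}"
  assumes "f \<in> borel_measurable borel"
  shows "integrable lborel f \<longleftrightarrow> integrable (lborel \<Otimes>\<^sub>M lborel) (\<lambda>(x, y). f (Complex x y))"
  using assms by (subst lborel_complex) (simp add: integrable_distr_eq case_prod_unfold)

lemma integral_lborel_complex:
  fixes f :: "complex \<Rightarrow> 'b::{banach, second_countable_topology}"
  assumes "f \<in> borel_measurable borel"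
  shows "integral\<^sup>L lborel f = (\<integral>(x, y). f (Complex x y) \<partial>(lborel \<Otimes>\<^sub>M lborel))"
  using assms by (subst lborel_complex) (simp add: integral_distr case_prod_unfold)

lemma Complex_swap: "\<i> * cnj (Complex x y) = Complex y x"
  by (simp add: complex_eq_iff)

lemma
  fixes f :: "complex \<Rightarrow> 'b::{banach, second_countable_topology}"
  assumes [measurable]: "f \<in> borel_measurable borel"
  shows integrable_lborel_complex_swap_iff:
      "integrable lborel (\<lambda>w. f (\<i> * cnj w)) \<longleftrightarrow> integrable lborel f"
    and integral_lborel_complex_swap: "(\<integral>w. f (\<i> * cnj w) \<partial>lborel) = integral\<^sup>L lborel f"
proof -
  have "(\<lambda>w. \<i> * cnj w) \<in> borel_measurable borel"
    by (intro borel_measurable_continuous_onI continuous_intros)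
  then have "(\<lambda>w. f (\<i> * cnj w)) \<in> borel_measurable borel"
    by measurable
  then show "integrable lborel (\<lambda>w. f (\<i> * cnj w)) \<longleftrightarrow> integrable lborel f"
    and "(\<integral>w. f (\<i> * cnj w) \<partial>lborel) = integral\<^sup>L lborel f"
    using lborel_pair.integrable_product_swap_iff[of "\<lambda>(x, y). f (Complex x y)"]
      lborel_pair.integral_product_swap[of "\<lambda>(x, y). f (Complex x y)"]
    by (simp_all add: integrable_lborel_complex_iff integral_lborel_complex Complex_swap case_prod_unfold)
qed

lemma
  fixes f g :: "real \<Rightarrow> 'a::{real_normed_field, banach, second_countable_topology}"
  assumes f: "integrable lborel f" and g: "integrable lborel g"
  shows integrable_lborel_complex_separable: "integrable lborel (\<lambda>w. f (Re w) * g (Im w))"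
    and integral_lborel_complex_separable:
      "(\<integral>w. f (Re w) * g (Im w) \<partial>lborel) = integral\<^sup>L lborel f * integral\<^sup>L lborel g"
proof -
  have [measurable]: "f \<in> borel_measurable borel" "g \<in> borel_measurable borel"
    using f g by (auto dest: borel_measurable_integrable)
  have prod: "integrable (lborel \<Otimes>\<^sub>M lborel) (\<lambda>(x, y). f x * g y)"
  proof (rule lborel_pair.Fubini_integrable)
    have "integrable lborel (\<lambda>x. norm (f x) * (\<integral>y. norm (g y) \<partial>lborel))"
      using f by (intro integrable_mult_left) auto
    then show "integrable lborel (\<lambda>x. \<integral>y. norm (case (x, y) of (x, y) \<Rightarrow> f x * g y) \<partial>lborel)"
      by (simp add: norm_mult)
    show "AE x in lborel. integrable lborel (\<lambda>y. case (x, y) of (x, y) \<Rightarrow> f x * g y)"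
      using g by (intro AE_I2) auto
  qed measurable
  then show "integrable lborel (\<lambda>w. f (Re w) * g (Im w))"
    by (simp add: integrable_lborel_complex_iff)
  have "(\<integral>w. f (Re w) * g (Im w) \<partial>lborel) = (\<integral>x. (\<integral>y. f x * g y \<partial>lborel) \<partial>lborel)"
    using lborel_pair.integral_fst'[OF prod] by (simp add: integral_lborel_complex)
  then show "(\<integral>w. f (Re w) * g (Im w) \<partial>lborel) = integral\<^sup>L lborel f * integral\<^sup>L lborel g"
    by simp
qed

section \<open>Gaussian integrals\<close>

lemma integrable_exp_neg_sq_half: "integrable lborel (\<lambda>x::real. exp (- (x\<^sup>2) / 2))"
proof -
  have "integrable lborel (\<lambda>x. sqrt (2 * pi) * (std_normal_density x * x ^ 0))"
    using integrable_std_normal_moment[of 0] by (intro integrable_mult_right)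
  then show ?thesis by (simp add: std_normal_density_def)
qed

lemma integrable_exp_neg_sq_linear:
  fixes \<alpha> :: complex
  shows "integrable lborel (\<lambda>x::real. exp (\<alpha> * of_real x - of_real (x\<^sup>2)))"
proof (rule Bochner_Integration.integrable_bound)
  show "integrable lborel (\<lambda>x. exp ((Re \<alpha>)\<^sup>2 / 2) * exp (- (x\<^sup>2) / 2))"
    using integrable_exp_neg_sq_half by (intro integrable_mult_right)
  have "Re \<alpha> * x - x\<^sup>2 \<le> (Re \<alpha>)\<^sup>2 / 2 + - (x\<^sup>2) / 2" for x
    using sum_power2_ge_zero[of "x - Re \<alpha>" 0] by (simp add: power2_eq_square algebra_simps)
  then show "AE x in lborel. norm (exp (\<alpha> * of_real x - of_real (x\<^sup>2)))
      \<le> norm (exp ((Re \<alpha>)\<^sup>2 / 2) * exp (- (x\<^sup>2) / 2))"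
    by (intro AE_I2) (simp add: exp_add[symmetric])
qed measurable

lemma integral_exp_neg_sq_iexp:
  "(\<integral>u. exp (- (u\<^sup>2)) *\<^sub>R iexp (t * u) \<partial>lborel) = of_real (sqrt pi * exp (- (t\<^sup>2) / 4))"
proof -
  define c :: real where "c = 1 / sqrt 2"
  have c: "c > 0" "c * sqrt (2 * pi) = sqrt pi" "\<And>v. (c * v)\<^sup>2 = v\<^sup>2 / 2"
    by (auto simp: c_def power_mult_distrib power_divide real_sqrt_mult)
  have char: "(\<integral>v. std_normal_density v *\<^sub>R iexp ((t * c) * v) \<partial>lborel) = char std_normal_distribution (t * c)"
    unfolding char_def by (subst integral_density) auto
  have "(\<integral>u. exp (- (u\<^sup>2)) *\<^sub>R iexp (t * u) \<partial>lborel)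
      = c *\<^sub>R (\<integral>v. exp (- ((0 + c * v)\<^sup>2)) *\<^sub>R iexp (t * (0 + c * v)) \<partial>lborel)"
    using lborel_integral_real_affine[of c "\<lambda>u. exp (- (u\<^sup>2)) *\<^sub>R iexp (t * u)" 0] c(1) by simp
  also have "\<dots> = (c * sqrt (2 * pi)) *\<^sub>R (\<integral>v. std_normal_density v *\<^sub>R iexp ((t * c) * v) \<partial>lborel)"
  proof -
    have pt: "exp (- ((0 + c * v)\<^sup>2)) *\<^sub>R iexp (t * (0 + c * v))
        = sqrt (2 * pi) *\<^sub>R (std_normal_density v *\<^sub>R iexp ((t * c) * v))" for v
      unfolding add_0_left c(3) by (simp add: std_normal_density_def mult_ac)
    show ?thesis
      unfolding pt integral_scaleR_right by (rule scaleR_scaleR)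
  qed
  finally show ?thesis
    using c(3)[of t] unfolding char char_std_normal_distribution c(2)
    by (simp add: scaleR_conv_of_real mult.commute)
qed

lemma integral_exp_neg_sq_linear:
  fixes \<alpha> :: complex
  shows "(\<integral>x. exp (\<alpha> * of_real x - of_real (x\<^sup>2)) \<partial>lborel) = sqrt pi * exp (\<alpha>\<^sup>2 / 4)"
proof -
  define s t where "s = Re \<alpha>" and "t = Im \<alpha>"
  have \<alpha>: "\<alpha> = of_real s + \<i> * of_real t"
    by (simp add: s_def t_def complex_eq)
  \<comment> \<open>completing the square: a shift removes Re alpha, and Im alpha becomes a Fourier phase\<close>
  have shift: "exp (\<alpha> * of_real (s / 2 + u) - of_real ((s / 2 + u)\<^sup>2))
      = exp (\<alpha>\<^sup>2 / 4) * (exp (t\<^sup>2 / 4) *\<^sub>R (exp (- (u\<^sup>2)) *\<^sub>R iexp (t * u)))" for u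
  proof -
    have "\<alpha> * of_real (s / 2 + u) - of_real ((s / 2 + u)\<^sup>2)
        = \<alpha>\<^sup>2 / 4 + (of_real (t\<^sup>2 / 4) + (of_real (- (u\<^sup>2)) + \<i> * of_real (t * u)))"
      unfolding \<alpha> by (simp add: power2_eq_square field_simps)
    then show ?thesis
      by (simp only: exp_add scaleR_conv_of_real exp_of_real)
  qed
  have "(\<integral>x. exp (\<alpha> * of_real x - of_real (x\<^sup>2)) \<partial>lborel)
      = (\<integral>u. exp (\<alpha> * of_real (s / 2 + 1 * u) - of_real ((s / 2 + 1 * u)\<^sup>2)) \<partial>lborel)"
    using lborel_integral_real_affine[of 1 "\<lambda>x. exp (\<alpha> * of_real x - of_real (x\<^sup>2))" "s / 2"]
    by (simp only: abs_one scaleR_one)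
  also have "\<dots> = exp (\<alpha>\<^sup>2 / 4) * (exp (t\<^sup>2 / 4) *\<^sub>R of_real (sqrt pi * exp (- (t\<^sup>2) / 4)))"
    unfolding mult_1_left shift
    by (simp only: integral_mult_right_zero integral_scaleR_right integral_exp_neg_sq_iexp)
  also have "\<dots> = sqrt pi * exp (\<alpha>\<^sup>2 / 4)"
    by (simp add: scaleR_conv_of_real exp_minus)
  finally show ?thesis .
qed

lemma integrable_exp_neg_cmod_sq_half: "integrable lborel (\<lambda>w::complex. exp (- (cmod w)\<^sup>2 / 2))"
proof -
  have "exp (- (cmod w)\<^sup>2 / 2) = exp (- (Re w)\<^sup>2 / 2) * exp (- (Im w)\<^sup>2 / 2)" for w
    by (simp add: cmod_power2 exp_add[symmetric] add_divide_distrib)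
  then show ?thesis
    using integrable_lborel_complex_separable[OF integrable_exp_neg_sq_half integrable_exp_neg_sq_half]
    by simp
qed

lemma power_le_fact_mult_exp:
  assumes "(u::real) \<ge> 0"
  shows "u ^ N \<le> fact N * exp u"
proof -
  have "u ^ N / fact N \<le> (\<Sum>n. u ^ n / fact n)"
    using sum_le_suminf[OF summable_exp[of u], of "{N}"] assms by (simp add: divide_inverse mult.commute)
  also have "\<dots> = exp u"
    by (simp add: exp_def divide_inverse mult.commute)
  finally show ?thesis
    by (simp add: divide_le_eq mult.commute)
qed

lemma power_mult_exp_le_gaussian:
  fixes t c :: real
  assumes "t \<ge> 0"
  shows "t ^ N * exp (c * t - t\<^sup>2) \<le> fact N * exp ((c + 1)\<^sup>2 / 2) * exp (- (t\<^sup>2) / 2)"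
proof -
  have "t ^ N * exp (c * t - t\<^sup>2) \<le> fact N * exp t * exp (c * t - t\<^sup>2)"
    using power_le_fact_mult_exp[OF assms] by (intro mult_right_mono) auto
  also have "\<dots> = fact N * exp ((c + 1) * t - t\<^sup>2)"
    by (simp add: exp_add[symmetric] algebra_simps)
  also have "\<dots> \<le> fact N * exp ((c + 1)\<^sup>2 / 2 + - (t\<^sup>2) / 2)"
    using sum_power2_ge_zero[of "t - (c + 1)" 0] by (simp add: power2_eq_square algebra_simps)
  finally show ?thesis
    by (simp only: exp_add mult.assoc)
qed

section \<open>Integration by parts on the complex plane\<close>

lemma integral_lborel_derivative_eq_0:
  fixes F f :: "real \<Rightarrow> 'a::euclidean_space"
  assumes "\<And>x. (F has_vector_derivative f x) (at x)" and "\<And>x. isCont f x"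
    and "integrable lborel f" and "(F \<longlongrightarrow> 0) at_top" and "(F \<longlongrightarrow> 0) at_bot"
  shows "integral\<^sup>L lborel f = 0"
proof -
  have "(LBINT x=-\<infinity>..\<infinity>. f x) = 0 - 0"
  proof (rule interval_integral_FTC_integrable)
    show "set_integrable lborel (einterval (-\<infinity>) \<infinity>) f"
      using assms(3) by (simp add: set_integrable_def einterval_def)
    show "((F \<circ> real_of_ereal) \<longlongrightarrow> 0) (at_right (-\<infinity>))"
      using assms(5) by (simp add: at_right_MInf filterlim_filtermap o_def)
    show "((F \<circ> real_of_ereal) \<longlongrightarrow> 0) (at_left \<infinity>)"
      using assms(4) by (simp add: at_left_PInf filterlim_filtermap o_def)
  qed (use assms(1,2) in auto)
  then show ?thesis
    by (simp add: interval_lebesgue_integral_def set_lebesgue_integral_def einterval_def)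
qed

lemma filterlim_Complex_at_infinity:
  "filterlim (\<lambda>x. Complex x y) at_infinity at_top"
  "filterlim (\<lambda>x. Complex x y) at_infinity at_bot"
proof -
  have norm: "\<bar>x\<bar> \<le> norm (Complex x y)" for x
    using abs_Re_le_cmod[of "Complex x y"] by simp
  show "filterlim (\<lambda>x. Complex x y) at_infinity at_top"
    unfolding filterlim_at_infinity[OF order_refl]
  proof (intro allI impI)
    fix r :: real
    show "\<forall>\<^sub>F x in at_top. r \<le> cmod (Complex x y)"
      using eventually_ge_at_top[of r] by eventually_elim (meson abs_ge_self norm order_trans)
  qed
  show "filterlim (\<lambda>x. Complex x y) at_infinity at_bot"
    unfolding filterlim_at_infinity[OF order_refl]
  proof (intro allI impI)
    fix r :: real
    show "\<forall>\<^sub>F x in at_bot. r \<le> cmod (Complex x y)"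
      using eventually_le_at_bot[of "- r"] by eventually_elim (smt (verit) norm)
  qed
qed

lemma integral_complex_partial_x_eq_0:
  fixes F f :: "complex \<Rightarrow> complex"
  assumes deriv: "\<And>x y. ((\<lambda>x. F (Complex x y)) has_vector_derivative f (Complex x y)) (at x)"
    and cont: "continuous_on UNIV f" and int: "integrable lborel f"
    and lim: "(F \<longlongrightarrow> 0) at_infinity"
  shows "integral\<^sup>L lborel f = 0"
proof -
  have [measurable]: "f \<in> borel_measurable borel"
    using cont by (rule borel_measurable_continuous_onI)
  have "integrable (lborel \<Otimes>\<^sub>M lborel) (\<lambda>(x, y). f (Complex x y))"
    using int by (simp add: integrable_lborel_complex_iff)
  then have "AE y in lborel. integrable lborel (\<lambda>x. f (Complex x y))"
    by (rule lborel_pair.AE_integrable_snd)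
  then have slices: "AE y in lborel. (\<integral>x. f (Complex x y) \<partial>lborel) = 0"
  proof eventually_elim
    case (elim y)
    show ?case
    proof (rule integral_lborel_derivative_eq_0)
      have "continuous_on UNIV (\<lambda>x. f (Complex x y))"
        unfolding Complex_eq by (rule continuous_on_compose2[OF cont]) (auto intro!: continuous_intros)
      then show "isCont (\<lambda>x. f (Complex x y)) x" for x
        by (simp add: continuous_on_eq_continuous_at)
      show "((\<lambda>x. F (Complex x y)) \<longlongrightarrow> 0) at_top" "((\<lambda>x. F (Complex x y)) \<longlongrightarrow> 0) at_bot"
        using filterlim_compose[OF lim filterlim_Complex_at_infinity(1)]
          filterlim_compose[OF lim filterlim_Complex_at_infinity(2)] by auto
    qed (use deriv elim in auto)
  qed
  have "integral\<^sup>L lborel f = (\<integral>y. (\<integral>x. f (Complex x y) \<partial>lborel) \<partial>lborel)"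
    using lborel_pair.integral_snd[of "\<lambda>x y. f (Complex x y)"] int
    by (simp add: integral_lborel_complex integrable_lborel_complex_iff)
  also have "\<dots> = 0"
    using integral_cong_AE[OF _ _ slices] by simp
  finally show ?thesis .
qed

lemma integral_complex_partial_y_eq_0:
  fixes F f :: "complex \<Rightarrow> complex"
  assumes deriv: "\<And>x y. ((\<lambda>y. F (Complex x y)) has_vector_derivative f (Complex x y)) (at y)"
    and cont: "continuous_on UNIV f" and int: "integrable lborel f"
    and lim: "(F \<longlongrightarrow> 0) at_infinity"
  shows "integral\<^sup>L lborel f = 0"
proof -
  have [measurable]: "f \<in> borel_measurable borel"
    using cont by (rule borel_measurable_continuous_onI)
  have "filterlim (\<lambda>w. \<i> * cnj w) at_infinity at_infinity"
    by (rule filterlim_norm_at_top_imp_at_infinity)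
      (simp add: norm_mult filterlim_at_infinity_imp_norm_at_top[OF filterlim_ident])
  moreover have "continuous_on UNIV (\<lambda>w. f (\<i> * cnj w))"
    by (rule continuous_on_compose2[OF cont]) (auto intro!: continuous_intros)
  ultimately have "integral\<^sup>L lborel (\<lambda>w. f (\<i> * cnj w)) = 0"
    using deriv int lim
    by (intro integral_complex_partial_x_eq_0[where F = "\<lambda>w. F (\<i> * cnj w)"])
      (auto simp: Complex_swap integrable_lborel_complex_swap_iff intro: filterlim_compose)
  then show ?thesis
    by (simp add: integral_lborel_complex_swap)
qed

section \<open>Gaussian moments in the complex plane\<close>

definition gauss_exp :: "complex \<Rightarrow> complex \<Rightarrow> complex \<Rightarrow> complex" where
  "gauss_exp a b w = exp (w * cnj a + b * cnj w - w * cnj w)"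

definition gauss_mono :: "nat \<Rightarrow> nat \<Rightarrow> complex \<Rightarrow> complex \<Rightarrow> complex \<Rightarrow> complex" where
  "gauss_mono m n a b w = w ^ m * cnj w ^ n * gauss_exp a b w"

lemma continuous_on_gauss_mono: "continuous_on UNIV (gauss_mono m n a b)"
  unfolding gauss_mono_def[abs_def] gauss_exp_def by (intro continuous_intros)

lemma norm_gauss_exp_le: "norm (gauss_exp a b w) \<le> exp ((cmod a + cmod b) * cmod w - (cmod w)\<^sup>2)"
proof -
  have "Re (w * cnj a) \<le> cmod a * cmod w" and "Re (b * cnj w) \<le> cmod b * cmod w"
    using complex_Re_le_cmod[of "w * cnj a"] complex_Re_le_cmod[of "b * cnj w"]
    by (simp_all add: norm_mult mult.commute)
  moreover have "Re (w * cnj w) = (cmod w)\<^sup>2"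
    using cmod_power2[of w] by (simp add: power2_eq_square)
  ultimately show ?thesis
    unfolding gauss_exp_def by (simp add: algebra_simps)
qed

lemma norm_gauss_mono_le:
  "norm (gauss_mono m n a b w)
     \<le> fact (m + n) * exp ((cmod a + cmod b + 1)\<^sup>2 / 2) * exp (- (cmod w)\<^sup>2 / 2)"
proof -
  have "norm (gauss_mono m n a b w) = cmod w ^ (m + n) * norm (gauss_exp a b w)"
    by (simp add: gauss_mono_def norm_mult norm_power power_add)
  also have "\<dots> \<le> cmod w ^ (m + n) * exp ((cmod a + cmod b) * cmod w - (cmod w)\<^sup>2)"
    by (intro mult_left_mono norm_gauss_exp_le) simp
  also have "\<dots> \<le> fact (m + n) * exp ((cmod a + cmod b + 1)\<^sup>2 / 2) * exp (- (cmod w)\<^sup>2 / 2)"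
    by (rule power_mult_exp_le_gaussian) simp
  finally show ?thesis .
qed

lemma integrable_gauss_mono: "integrable lborel (gauss_mono m n a b)"
proof (rule Bochner_Integration.integrable_bound)
  define C where "C = fact (m + n) * exp ((cmod a + cmod b + 1)\<^sup>2 / 2)"
  show "integrable lborel (\<lambda>w. C * exp (- (cmod w)\<^sup>2 / 2))"
    by (intro integrable_mult_right integrable_exp_neg_cmod_sq_half)
  show "AE w in lborel. norm (gauss_mono m n a b w) \<le> norm (C * exp (- (cmod w)\<^sup>2 / 2))"
    using norm_gauss_mono_le by (intro AE_I2) (simp add: C_def abs_mult)
  show "gauss_mono m n a b \<in> borel_measurable lborel"
    using continuous_on_gauss_mono by (simp add: borel_measurable_continuous_onI)
qed

lemma tendsto_gauss_mono_at_infinity: "(gauss_mono m n a b \<longlongrightarrow> 0) at_infinity"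
proof (rule Lim_null_comparison)
  define C where "C = fact (m + n) * exp ((cmod a + cmod b + 1)\<^sup>2 / 2)"
  show "\<forall>\<^sub>F w in at_infinity. norm (gauss_mono m n a b w) \<le> C * exp (- (cmod w)\<^sup>2 / 2)"
    unfolding C_def by (intro always_eventually allI norm_gauss_mono_le)
  have "((\<lambda>r::real. C * exp (- r\<^sup>2 / 2)) \<longlongrightarrow> 0) at_top"
    by real_asymp
  then show "((\<lambda>w. C * exp (- (cmod w)\<^sup>2 / 2)) \<longlongrightarrow> 0) at_infinity"
    by (rule filterlim_compose) (rule filterlim_at_infinity_imp_norm_at_top[OF filterlim_ident])
qed

lemma gauss_mono_has_vector_derivative:
  fixes z d :: complex and t :: real
  defines "w \<equiv> z + of_real t * d"
  shows "((\<lambda>s. gauss_mono 0 p a b (z + of_real s * d)) has_vector_derivative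
           (d * (cnj a - cnj w) * cnj w ^ p
            + cnj d * (of_nat p * cnj w ^ (p - 1) + (b - w) * cnj w ^ p)) * gauss_exp a b w) (at t)"
proof -
  \<comment> \<open>a holomorphic extension of the real restriction, with w and conj w treated as independent\<close>
  define \<Phi> where "\<Phi> u = (cnj z + u * cnj d) ^ p
      * exp ((z + u * d) * cnj a + b * (cnj z + u * cnj d) - (z + u * d) * (cnj z + u * cnj d))" for u
  have "(\<Phi> has_field_derivative
      (d * (cnj a - cnj w) * cnj w ^ p
       + cnj d * (of_nat p * cnj w ^ (p - 1) + (b - w) * cnj w ^ p)) * gauss_exp a b w) (at (of_real t))"
    unfolding \<Phi>_def[abs_def]
    by (rule derivative_eq_intros refl | simp)+ (simp add: w_def gauss_exp_def algebra_simps)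
  moreover have "\<Phi> (of_real s) = gauss_mono 0 p a b (z + of_real s * d)" for s
    by (simp add: \<Phi>_def gauss_mono_def gauss_exp_def)
  ultimately show ?thesis
    using has_vector_derivative_real_field by fastforce
qed

lemma integral_gauss_mono_Suc:
  "integral\<^sup>L lborel (gauss_mono 0 (Suc p) a b) = cnj a * integral\<^sup>L lborel (gauss_mono 0 p a b)"
proof -
  \<comment> \<open>U and V are the Wirtinger derivatives d/dw and d/d(conj w) of conj(w)^p * gauss_exp a b w,
    so its derivatives in x and y are U + V and i (U - V)\<close>
  define U where "U w = (cnj a - cnj w) * cnj w ^ p * gauss_exp a b w" for w
  define V where "V w = (of_nat p * cnj w ^ (p - 1) + (b - w) * cnj w ^ p) * gauss_exp a b w" for w
  have U_eq: "U = (\<lambda>w. cnj a * gauss_mono 0 p a b w - gauss_mono 0 (Suc p) a b w)"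
    by (simp add: fun_eq_iff U_def gauss_mono_def algebra_simps)
  have V_eq: "V = (\<lambda>w. of_nat p * gauss_mono 0 (p - 1) a b w + b * gauss_mono 0 p a b w
      - gauss_mono 1 p a b w)"
    by (simp add: fun_eq_iff V_def gauss_mono_def algebra_simps)
  have int: "integrable lborel U" "integrable lborel V"
    unfolding U_eq V_eq
    by (auto intro!: integrable_gauss_mono Bochner_Integration.integrable_diff
        Bochner_Integration.integrable_add Bochner_Integration.integrable_mult_right)
  have cont: "continuous_on UNIV U" "continuous_on UNIV V"
    unfolding U_def[abs_def] V_def[abs_def] gauss_exp_def by (intro continuous_intros)+
  have "integral\<^sup>L lborel (\<lambda>w. U w + V w) = 0"
  proof (rule integral_complex_partial_x_eq_0[where F = "gauss_mono 0 p a b"])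
    fix x y :: real
    have "Complex x' y = \<i> * of_real y + of_real x' * 1" for x'
      by (simp add: complex_eq_iff)
    then show "((\<lambda>x. gauss_mono 0 p a b (Complex x y))
        has_vector_derivative U (Complex x y) + V (Complex x y)) (at x)"
      by (simp only:) (rule has_vector_derivative_eq_rhs[OF gauss_mono_has_vector_derivative],
          simp add: U_def V_def algebra_simps)
  qed (use cont int in \<open>auto intro: continuous_on_add tendsto_gauss_mono_at_infinity\<close>)
  moreover have "integral\<^sup>L lborel (\<lambda>w. \<i> * U w - \<i> * V w) = 0"
  proof (rule integral_complex_partial_y_eq_0[where F = "gauss_mono 0 p a b"])
    fix x y :: real
    have "Complex x y' = of_real x + of_real y' * \<i>" for y'
      by (simp add: complex_eq_iff)
    then show "((\<lambda>y. gauss_mono 0 p a b (Complex x y))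
        has_vector_derivative \<i> * U (Complex x y) - \<i> * V (Complex x y)) (at y)"
      by (simp only:) (rule has_vector_derivative_eq_rhs[OF gauss_mono_has_vector_derivative],
          simp add: U_def V_def algebra_simps)
  qed (use cont int in
      \<open>auto intro: continuous_on_diff continuous_on_mult_left tendsto_gauss_mono_at_infinity\<close>)
  ultimately have "integral\<^sup>L lborel U = 0"
    using int by (simp add: integral_add integral_diff right_diff_distrib[symmetric] add_eq_0_iff)
  then show ?thesis
    unfolding U_eq using integrable_gauss_mono by (simp add: integral_diff)
qed

lemma integral_gauss_exp: "integral\<^sup>L lborel (gauss_exp a b) = pi * exp (b * cnj a)"
proof -
  define \<alpha> \<beta> where "\<alpha> = cnj a + b" and "\<beta> = \<i> * (cnj a - b)"
  define f g where "f x = exp (\<alpha> * of_real x - of_real (x\<^sup>2))" and "g x = exp (\<beta> * of_real x - of_real (x\<^sup>2))" for x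
  have "gauss_exp a b = (\<lambda>w. f (Re w) * g (Im w))"
  proof
    fix w
    have "w * cnj a + b * cnj w - w * cnj w
        = (\<alpha> * of_real (Re w) - of_real ((Re w)\<^sup>2)) + (\<beta> * of_real (Im w) - of_real ((Im w)\<^sup>2))"
      unfolding \<alpha>_def \<beta>_def
      by (subst (1 2 3 4) complex_eq[of w]) (simp add: power2_eq_square algebra_simps)
    then show "gauss_exp a b w = f (Re w) * g (Im w)"
      by (simp add: gauss_exp_def f_def g_def exp_add)
  qed
  then have "integral\<^sup>L lborel (gauss_exp a b) = integral\<^sup>L lborel f * integral\<^sup>L lborel g"
    using integral_lborel_complex_separable[of f g] integrable_exp_neg_sq_linear
    by (simp add: f_def[abs_def] g_def[abs_def])
  also have "\<dots> = pi * exp ((\<alpha>\<^sup>2 + \<beta>\<^sup>2) / 4)"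
  proof -
    have "integral\<^sup>L lborel f = sqrt pi * exp (\<alpha>\<^sup>2 / 4)" "integral\<^sup>L lborel g = sqrt pi * exp (\<beta>\<^sup>2 / 4)"
      unfolding f_def[abs_def] g_def[abs_def] by (rule integral_exp_neg_sq_linear)+
    then show ?thesis
      by (simp add: add_divide_distrib exp_add flip: of_real_mult)
  qed
  also have "(\<alpha>\<^sup>2 + \<beta>\<^sup>2) / 4 = b * cnj a"
    unfolding \<alpha>_def \<beta>_def by (simp add: power2_eq_square field_simps)
  finally show ?thesis .
qed

lemma integral_gauss_moment:
  "(\<integral>w. cnj w ^ p * gauss_exp a b w \<partial>lborel) = pi * cnj a ^ p * exp (b * cnj a)"
proof (induction p)
  case 0
  then show ?case
    using integral_gauss_exp[of a b] by simp
next
  case (Suc p)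
  then show ?case
    using integral_gauss_mono_Suc[of p a b] by (simp add: gauss_mono_def[abs_def])
qed

section \<open>The Ginibre kernel\<close>

lemma ginibre_K_eq: "ginibre_K w z = 1 / pi * exp (w * cnj z - (w * cnj w + z * cnj z) / 2)"
proof -
  have "of_real (((cmod w)\<^sup>2 + (cmod z)\<^sup>2) / 2) = (w * cnj w + z * cnj z) / 2"
    by (simp only: of_real_divide of_real_add complex_norm_square of_real_numeral)
  then show ?thesis
    unfolding ginibre_K_def diff_conv_add_uminus exp_add
    by (simp only: of_real_divide of_real_1 mult_ac)
qed

lemma ginibre_K_diag: "ginibre_K w w = 1 / pi"
  by (simp add: ginibre_K_eq)

lemma ginibre_K_mult:
  "ginibre_K w a * ginibre_K b w = (1 / pi)\<^sup>2 * exp (- (a * cnj a + b * cnj b) / 2) * gauss_exp a b w"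
proof -
  have "ginibre_K w a * ginibre_K b w
      = (1 / pi)\<^sup>2 * exp ((w * cnj a - (w * cnj w + a * cnj a) / 2) + (b * cnj w - (b * cnj b + w * cnj w) / 2))"
    unfolding ginibre_K_eq exp_add[of "w * cnj a - _"] by (simp only: power2_eq_square of_real_mult mult_ac)
  also have "(w * cnj a - (w * cnj w + a * cnj a) / 2) + (b * cnj w - (b * cnj b + w * cnj w) / 2)
      = - (a * cnj a + b * cnj b) / 2 + (w * cnj a + b * cnj w - w * cnj w)"
    by (simp add: field_simps)
  finally show ?thesis
    unfolding exp_add gauss_exp_def by (simp only: mult.assoc)
qed

lemma
  shows integrable_ginibre_K_moment: "integrable lborel (\<lambda>w. cnj w ^ p * (ginibre_K w a * ginibre_K b w))"
    and integral_ginibre_K_moment: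
      "(\<integral>w. cnj w ^ p * (ginibre_K w a * ginibre_K b w) \<partial>lborel) = cnj a ^ p * ginibre_K b a"
proof -
  define c where "c = (1 / pi)\<^sup>2 * exp (- (a * cnj a + b * cnj b) / 2)"
  have eq: "(\<lambda>w. cnj w ^ p * (ginibre_K w a * ginibre_K b w)) = (\<lambda>w. c * gauss_mono 0 p a b w)"
    by (simp add: fun_eq_iff ginibre_K_mult gauss_mono_def c_def mult_ac)
  show "integrable lborel (\<lambda>w. cnj w ^ p * (ginibre_K w a * ginibre_K b w))"
    unfolding eq by (intro Bochner_Integration.integrable_mult_right integrable_gauss_mono)
  have "(\<integral>w. cnj w ^ p * (ginibre_K w a * ginibre_K b w) \<partial>lborel) = c * (pi * cnj a ^ p * exp (b * cnj a))"
    unfolding eq using integral_gauss_moment[of p a b] by (simp add: gauss_mono_def mult.assoc)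
  also have "\<dots> = cnj a ^ p * (1 / pi * exp (- (a * cnj a + b * cnj b) / 2 + b * cnj a))"
    by (simp add: c_def exp_add power2_eq_square)
  also have "- (a * cnj a + b * cnj b) / 2 + b * cnj a = b * cnj a - (b * cnj b + a * cnj a) / 2"
    by (simp add: field_simps)
  also have "cnj a ^ p * (1 / pi * exp \<dots>) = cnj a ^ p * ginibre_K b a"
    by (simp only: ginibre_K_eq)
  finally show "(\<integral>w. cnj w ^ p * (ginibre_K w a * ginibre_K b w) \<partial>lborel) = cnj a ^ p * ginibre_K b a" .
qed

lemma ginibre_rho_Suc_fun_upd:
  "ginibre_rho (Suc k) (zs(k := w))
     = ginibre_K w w * ginibre_rho k zs
       - (\<Sum>l<k. \<Sum>j<k. ginibre_K w (zs l) * ginibre_K (zs j) w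
            * cofactor (mat k k (\<lambda>(j, l). ginibre_K (zs j) (zs l))) j l)"
proof -
  define M where "M = mat (Suc k) (Suc k) (\<lambda>(j, l). ginibre_K ((zs(k := w)) j) ((zs(k := w)) l))"
  have M: "M \<in> carrier_mat (Suc k) (Suc k)"
    by (simp add: M_def)
  have "mat_delete M k k = mat k k (\<lambda>(j, l). ginibre_K (zs j) (zs l))"
    by (intro eq_matI) (auto simp: M_def mat_delete_def)
  then show ?thesis
    using det_bordered[OF M] by (simp add: ginibre_rho_def M_def)
qed

theorem mainTheorem1:
  fixes k p :: nat and zs :: "nat \<Rightarrow> complex"
  assumes "k \<ge> 1"
  shows "integrable lborel
           (\<lambda>w::complex. cnj w ^ p *
              (ginibre_rho (k + 1) (zs(k := w)) - complex_of_real (1 / pi) * ginibre_rho k zs))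
       \<and> (\<integral>w. cnj w ^ p *
              (ginibre_rho (k + 1) (zs(k := w)) - complex_of_real (1 / pi) * ginibre_rho k zs) \<partial>lborel)
         + (\<Sum>j<k. cnj (zs j) ^ p) * ginibre_rho k zs = 0"
proof -
  \<comment> \<open>the identity holds for k = 0 as well\<close>
  define A where "A = mat k k (\<lambda>(j, l). ginibre_K (zs j) (zs l))"
  define T where "T l j w = cofactor A j l * (cnj w ^ p * (ginibre_K w (zs l) * ginibre_K (zs j) w))" for l j w
  have rho: "ginibre_rho k zs = det A"
    by (simp add: ginibre_rho_def A_def)
  have integrand: "(\<lambda>w. cnj w ^ p * (ginibre_rho (k + 1) (zs(k := w)) - of_real (1 / pi) * ginibre_rho k zs))
      = (\<lambda>w. - (\<Sum>l<k. \<Sum>j<k. T l j w))"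
    by (simp add: fun_eq_iff ginibre_rho_Suc_fun_upd ginibre_K_diag T_def A_def sum_distrib_left mult_ac)
  have int: "integrable lborel (\<lambda>w. - (\<Sum>l<k. \<Sum>j<k. T l j w))"
    unfolding T_def
    by (intro Bochner_Integration.integrable_minus Bochner_Integration.integrable_sum
        Bochner_Integration.integrable_mult_right integrable_ginibre_K_moment)
  have "(\<integral>w. - (\<Sum>l<k. \<Sum>j<k. T l j w) \<partial>lborel)
      = - (\<Sum>l<k. \<Sum>j<k. cofactor A j l * (cnj (zs l) ^ p * ginibre_K (zs j) (zs l)))"
    by (simp add: T_def integrable_ginibre_K_moment integral_ginibre_K_moment)
  also have "\<dots> = - (\<Sum>l<k. cnj (zs l) ^ p * det A)"
    using laplace_expansion_column[of A k] by (simp add: A_def sum_distrib_left mult_ac)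
  finally show ?thesis
    using int unfolding integrand unfolding rho by (simp add: sum_distrib_right)
qed

end
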